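(* Let $\phi_1,\phi_2:\mathbb{R}^m\to\mathbb{R}$, where $\phi_1$ is $L$-Lipschitz, and suppose $|\phi_1(w)-\phi_2(w)|\le V$ for all $w\in\mathbb{R}^m$. For $\mu>0$, $y\in\mathbb{R}^m$ and $u\sim\mathcal{N}(0,I_m)$ define $g(y;u)=\frac1\mu\big(\phi_1(y+\mu u)-\phi_2(y)\big)u$. Then $\mathbb{E}_u[g(y;u)]=\nabla\phi_{1,\mu}(y)$ and $$\mathbb{E}_u\big[\|g(y;u)\|^2\big]\le2L^2(m+4)^2+\frac{2mV^2}{\mu^2}.$$
   Context: $\phi_{1,\mu}(y)=\mathbb{E}_{u\sim\mathcal{N}(0,I_m)}[\phi_1(y+\mu u)]$ denotes the Gaussian smoothing of $\phi_1$ with parameter $\mu$ (it is differentiable). In the paper this is applied with $\phi_1=f_k^L(x,\cdot)$, $\phi_2=f_{k+1/2}^L(x,\cdot)$, Lovász extensions of consecutive cost functions in an online problem whose values change by at most $V$ between queries. *)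

theory Defs
  imports "HOL-Analysis.Analysis" "HOL-Probability.Probability"
begin

definition std_gaussian :: "(real ^ 'm) measure" where
  "std_gaussian = density lborel
     (\<lambda>x. ennreal ((2 * pi) powr (- real CARD('m) / 2) * exp (- (norm x)\<^sup>2 / 2)))"

definition gauss_smooth :: "real \<Rightarrow> (real ^ 'm \<Rightarrow> real) \<Rightarrow> real ^ 'm \<Rightarrow> real" where
  "gauss_smooth \<mu> \<phi> y = (\<integral>u. \<phi> (y + \<mu> *\<^sub>R u) \<partial>(std_gaussian :: (real ^ 'm) measure))"

definition zo_grad :: "real \<Rightarrow> (real ^ 'm \<Rightarrow> real) \<Rightarrow> (real ^ 'm \<Rightarrow> real) \<Rightarrow> real ^ 'm \<Rightarrow> real ^ 'm \<Rightarrow> real ^ 'm" where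
  "zo_grad \<mu> \<phi>1 \<phi>2 y u = (1 / \<mu>) *\<^sub>R ((\<phi>1 (y + \<mu> *\<^sub>R u) - \<phi>2 y) *\<^sub>R u)"

end

theory Submission
  imports Defs
begin

text \<open>
  The standard Gaussian on R^m is a product of one-dimensional standard normals, so its
  polynomial and exponential moments reduce to one-dimensional ones: E u = 0, E |u|^2 = m,
  E |u|^4 = m (m + 2), and exp (c |u|) is integrable for every c. Translating the Gaussian by s
  multiplies its density by exp (u \<bullet> s - |s|^2 / 2) (Cameron-Martin), which for |s| \<le> 1 is
  1 + u \<bullet> s up to O(|s|^2 exp (3 |u|)). Hence for every \<psi> of at most exponential growth,
  s \<mapsto> E \<psi>(u + s) is differentiable at 0 with gradient E [\<psi>(u) u]. Taking \<psi>(u) = \<phi>1(y + \<mu> u)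
  and applying the chain rule gives the gradient of the smoothing as E g(y; u), since the term
  \<phi>2(y) u of g has mean zero. For the second moment, |\<phi>1(y + \<mu> u) - \<phi>2(y)|^2 is at most
  2 L^2 \<mu>^2 |u|^2 + 2 V^2, whence E |g|^2 \<le> 2 L^2 m (m + 2) + 2 m V^2 / \<mu>^2.
\<close>

section \<open>Product structure of the standard Gaussian\<close>

lemma
  fixes g :: "'a::euclidean_space \<Rightarrow> real \<Rightarrow> real"
  assumes int: "\<And>b. b \<in> Basis \<Longrightarrow> integrable lborel (g b)"
  shows integrable_lborel_prod_coords: "integrable lborel (\<lambda>x::'a. \<Prod>b\<in>Basis. g b (x \<bullet> b))"
    and integral_lborel_prod_coords:
      "(\<integral>x. (\<Prod>b\<in>Basis. g b (x \<bullet> b)) \<partial>(lborel::'a measure)) = (\<Prod>b\<in>Basis. integral\<^sup>L lborel (g b))"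
proof -
  interpret product_sigma_finite "\<lambda>_::'a. lborel::real measure"
    by (simp add: product_sigma_finite_def sigma_finite_lborel)
  have [measurable]: "\<And>b. b \<in> Basis \<Longrightarrow> g b \<in> borel_measurable borel"
    using borel_measurable_integrable[OF int] by simp
  let ?F = "\<lambda>x::'a. \<Prod>b\<in>Basis. g b (x \<bullet> b)"
  have coords: "(\<lambda>f. \<Sum>c\<in>Basis. f c *\<^sub>R c) \<in> measurable (\<Pi>\<^sub>M b\<in>Basis. lborel) (borel :: 'a measure)"
    by measurable
  have F: "?F \<in> borel_measurable borel"
    by measurable
  have F_coords: "?F (\<Sum>c\<in>Basis. f c *\<^sub>R c) = (\<Prod>b\<in>Basis. g b (f b))" for f
    by (intro prod.cong refl) simp
  have "integrable (\<Pi>\<^sub>M b\<in>Basis. lborel) (\<lambda>f. \<Prod>b\<in>Basis. g b (f b))"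
    by (intro product_integrable_prod) (auto intro: int)
  then show "integrable lborel ?F"
    by (subst lborel_eq) (simp add: integrable_distr_eq[OF coords F] F_coords)
  have "(\<integral>f. (\<Prod>b\<in>Basis. g b (f b)) \<partial>(\<Pi>\<^sub>M b\<in>Basis. lborel)) = (\<Prod>b\<in>Basis. integral\<^sup>L lborel (g b))"
    by (intro product_integral_prod) (auto intro: int)
  then show "integral\<^sup>L lborel ?F = (\<Prod>b\<in>Basis. integral\<^sup>L lborel (g b))"
    by (subst lborel_eq) (simp add: integral_distr[OF coords F] F_coords)
qed

lemma norm_power2_eq_sum_inner: "(norm x)\<^sup>2 = (\<Sum>b\<in>Basis. (x \<bullet> b)\<^sup>2)"
  for x :: "'a::euclidean_space"
  unfolding power2_norm_eq_inner by (subst euclidean_inner) (simp add: power2_eq_square)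

definition std_gaussian_density :: "real ^ 'm \<Rightarrow> real" where
  "std_gaussian_density x = (2 * pi) powr (- real CARD('m) / 2) * exp (- (norm x)\<^sup>2 / 2)"

lemma borel_measurable_std_gaussian_density [measurable]:
  "std_gaussian_density \<in> borel_measurable borel"
  unfolding std_gaussian_density_def by measurable

lemma std_gaussian_density_nonneg: "0 \<le> std_gaussian_density x"
  by (simp add: std_gaussian_density_def)

lemma std_gaussian_eq_density: "std_gaussian = density lborel (\<lambda>x. ennreal (std_gaussian_density x))"
  unfolding std_gaussian_def std_gaussian_density_def ..

lemma sets_std_gaussian [simp, measurable_cong]: "sets std_gaussian = sets borel"
  by (simp add: std_gaussian_eq_density)

lemma std_gaussian_density_eq_prod:
  fixes x :: "real ^ 'm"
  shows "std_gaussian_density x = (\<Prod>b\<in>Basis. std_normal_density (x \<bullet> b))"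
proof -
  have "(2 * pi) powr (- real CARD('m) / 2) = ((2 * pi) powr (- 1 / 2)) ^ CARD('m)"
    by (simp add: powr_realpow[symmetric] powr_powr)
  also have "(2 * pi) powr (- 1 / 2) = 1 / sqrt (2 * pi)"
    by (simp add: powr_minus_divide powr_half_sqrt[symmetric])
  finally have "std_gaussian_density x = (\<Prod>b\<in>(Basis :: (real ^ 'm) set). 1 / sqrt (2 * pi)) * (\<Prod>b\<in>Basis. exp (- (x \<bullet> b)\<^sup>2 / 2))"
    by (simp add: std_gaussian_density_def norm_power2_eq_sum_inner exp_sum[symmetric]
        sum_divide_distrib[symmetric] sum_negf)
  then show ?thesis
    unfolding std_normal_density_def prod.distrib by simp
qed

lemma integral_std_gaussian:
  fixes f :: "real ^ 'm \<Rightarrow> 'b::{banach, second_countable_topology}"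
  assumes "f \<in> borel_measurable borel"
  shows "(\<integral>x. f x \<partial>std_gaussian) = (\<integral>x. std_gaussian_density x *\<^sub>R f x \<partial>lborel)"
  using assms by (simp add: std_gaussian_eq_density integral_density std_gaussian_density_nonneg)

lemma integrable_std_gaussian_iff:
  fixes f :: "real ^ 'm \<Rightarrow> 'b::{banach, second_countable_topology}"
  assumes "f \<in> borel_measurable borel"
  shows "integrable std_gaussian f \<longleftrightarrow> integrable lborel (\<lambda>x. std_gaussian_density x *\<^sub>R f x)"
  using assms by (simp add: std_gaussian_eq_density integrable_density std_gaussian_density_nonneg)

lemma
  fixes g :: "real ^ 'm \<Rightarrow> real \<Rightarrow> real"
  assumes [measurable]: "\<And>b. b \<in> Basis \<Longrightarrow> g b \<in> borel_measurable borel"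
    and int: "\<And>b. b \<in> Basis \<Longrightarrow> integrable lborel (\<lambda>t. std_normal_density t * g b t)"
  shows integrable_std_gaussian_prod_coords:
      "integrable std_gaussian (\<lambda>x::real ^ 'm. \<Prod>b\<in>Basis. g b (x \<bullet> b))"
    and integral_std_gaussian_prod_coords:
      "(\<integral>x. (\<Prod>b\<in>Basis. g b (x \<bullet> b)) \<partial>std_gaussian) =
         (\<Prod>b\<in>Basis. \<integral>t. std_normal_density t * g b t \<partial>lborel)"
proof -
  have density_times: "std_gaussian_density x * (\<Prod>b\<in>Basis. g b (x \<bullet> b)) =
      (\<Prod>b\<in>Basis. std_normal_density (x \<bullet> b) * g b (x \<bullet> b))" for x :: "real ^ 'm"
    by (simp add: std_gaussian_density_eq_prod prod.distrib)
  show "integrable std_gaussian (\<lambda>x::real ^ 'm. \<Prod>b\<in>Basis. g b (x \<bullet> b))"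
    by (simp add: integrable_std_gaussian_iff density_times
        integrable_lborel_prod_coords[where g = "\<lambda>b t. std_normal_density t * g b t"] int)
  show "(\<integral>x. (\<Prod>b\<in>Basis. g b (x \<bullet> b)) \<partial>std_gaussian) =
      (\<Prod>b\<in>Basis. \<integral>t. std_normal_density t * g b t \<partial>lborel)"
    by (simp add: integral_std_gaussian density_times
        integral_lborel_prod_coords[where g = "\<lambda>b t. std_normal_density t * g b t"] int)
qed

section \<open>Polynomial moments\<close>

definition std_normal_moment :: "nat \<Rightarrow> real" where
  "std_normal_moment n = (\<integral>t. std_normal_density t * t ^ n \<partial>lborel)"

lemma std_normal_moment_0 [simp]: "std_normal_moment 0 = 1"
  using integral_std_normal_moment_even[of 0] by (simp add: std_normal_moment_def)

lemma std_normal_moment_1 [simp]: "std_normal_moment (Suc 0) = 0"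
  using integral_std_normal_moment_odd[of 0] by (simp add: std_normal_moment_def)

lemma std_normal_moment_2 [simp]: "std_normal_moment 2 = 1"
  using integral_std_normal_moment_even[of 1] by (simp add: std_normal_moment_def)

lemma std_normal_moment_4 [simp]: "std_normal_moment 4 = 3"
  using integral_std_normal_moment_even[of 2] by (simp add: std_normal_moment_def fact_numeral)

lemma
  fixes b c :: "real ^ 'm"
  assumes b: "b \<in> Basis" and c: "c \<in> Basis"
  shows integrable_std_gaussian_coord_powers:
      "integrable std_gaussian (\<lambda>x. (x \<bullet> b) ^ i * (x \<bullet> c) ^ j)"
    and integral_std_gaussian_coord_powers:
      "(\<integral>x. (x \<bullet> b) ^ i * (x \<bullet> c) ^ j \<partial>std_gaussian) =
         (if b = c then std_normal_moment (i + j) else std_normal_moment i * std_normal_moment j)"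
proof -
  define k where "k d = (if d = b then i else 0) + (if d = c then j else (0::nat))" for d
  have monomial: "(\<Prod>d\<in>Basis. (x \<bullet> d) ^ k d) = (x \<bullet> b) ^ i * (x \<bullet> c) ^ j" for x :: "real ^ 'm"
    using b c by (simp add: k_def power_add prod.distrib if_distrib[of "\<lambda>n. _ ^ n"] cong: if_cong)
  note prod_coords = integrable_std_gaussian_prod_coords integral_std_gaussian_prod_coords
  note monomial_coords = prod_coords[where g = "\<lambda>d t. t ^ k d", OF _ integrable_std_normal_moment]
  show "integrable std_gaussian (\<lambda>x. (x \<bullet> b) ^ i * (x \<bullet> c) ^ j)"
    using monomial_coords(1) by (simp add: monomial)
  have "(\<Prod>d\<in>Basis. std_normal_moment (k d)) =
      (if b = c then std_normal_moment (i + j) else std_normal_moment i * std_normal_moment j)"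
  proof (cases "b = c")
    case True
    then have "std_normal_moment (k d) = (if d = b then std_normal_moment (i + j) else 1)" for d
      by (simp add: k_def)
    then show ?thesis
      using b True by simp
  next
    case False
    then have "std_normal_moment (k d) =
        (if d = b then std_normal_moment i else 1) * (if d = c then std_normal_moment j else 1)" for d
      by (simp add: k_def)
    then show ?thesis
      using b c False by (simp add: prod.distrib)
  qed
  then show "(\<integral>x. (x \<bullet> b) ^ i * (x \<bullet> c) ^ j \<partial>std_gaussian) =
      (if b = c then std_normal_moment (i + j) else std_normal_moment i * std_normal_moment j)"
    using monomial_coords(2) by (simp add: monomial std_normal_moment_def)
qed

lemma
  shows integrable_std_gaussian_id: "integrable std_gaussian (\<lambda>u::real ^ 'm. u)"
    and integral_std_gaussian_id: "(\<integral>u. u \<partial>(std_gaussian :: (real ^ 'm) measure)) = 0"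
proof -
  have coord: "integrable std_gaussian (\<lambda>u::real ^ 'm. u \<bullet> b)"
    "(\<integral>u. u \<bullet> b \<partial>(std_gaussian :: (real ^ 'm) measure)) = 0" if "b \<in> Basis" for b :: "real ^ 'm"
    using integrable_std_gaussian_coord_powers[OF that that, of 1 0]
      integral_std_gaussian_coord_powers[OF that that, of 1 0] by simp_all
  have "integrable std_gaussian (\<lambda>u::real ^ 'm. \<Sum>b\<in>Basis. (u \<bullet> b) *\<^sub>R b)"
    using coord by (auto intro!: Bochner_Integration.integrable_sum integrable_scaleR_left)
  then show int: "integrable std_gaussian (\<lambda>u::real ^ 'm. u)"
    by (simp add: euclidean_representation)
  show "(\<integral>u. u \<partial>(std_gaussian :: (real ^ 'm) measure)) = 0"
  proof (rule euclidean_eqI)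
    fix b :: "real ^ 'm"
    assume "b \<in> Basis"
    then show "(\<integral>u. u \<partial>std_gaussian) \<bullet> b = 0 \<bullet> b"
      using int coord by simp
  qed
qed

lemma
  shows integrable_std_gaussian_norm_power2:
      "integrable std_gaussian (\<lambda>x::real ^ 'm. (norm x)\<^sup>2)"
    and integral_std_gaussian_norm_power2:
      "(\<integral>x. (norm x)\<^sup>2 \<partial>(std_gaussian :: (real ^ 'm) measure)) = real CARD('m)"
proof -
  have coord: "integrable std_gaussian (\<lambda>x::real ^ 'm. (x \<bullet> b)\<^sup>2)"
    "(\<integral>x. (x \<bullet> b)\<^sup>2 \<partial>(std_gaussian :: (real ^ 'm) measure)) = 1" if "b \<in> Basis" for b :: "real ^ 'm"
    using integrable_std_gaussian_coord_powers[OF that that, of 2 0]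
      integral_std_gaussian_coord_powers[OF that that, of 2 0] by simp_all
  show "integrable std_gaussian (\<lambda>x::real ^ 'm. (norm x)\<^sup>2)"
    unfolding norm_power2_eq_sum_inner using coord by auto
  show "(\<integral>x. (norm x)\<^sup>2 \<partial>(std_gaussian :: (real ^ 'm) measure)) = real CARD('m)"
    unfolding norm_power2_eq_sum_inner using coord by (subst Bochner_Integration.integral_sum) auto
qed

lemma
  shows integrable_std_gaussian_norm_power4:
      "integrable std_gaussian (\<lambda>x::real ^ 'm. (norm x) ^ 4)"
    and integral_std_gaussian_norm_power4:
      "(\<integral>x. (norm x) ^ 4 \<partial>(std_gaussian :: (real ^ 'm) measure)) =
         real CARD('m) * (real CARD('m) + 2)"
proof -
  have norm4: "(norm x) ^ 4 = (\<Sum>b\<in>Basis. \<Sum>c\<in>Basis. (x \<bullet> b)\<^sup>2 * (x \<bullet> c)\<^sup>2)" for x :: "real ^ 'm"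
  proof -
    have "(norm x) ^ 4 = ((norm x)\<^sup>2)\<^sup>2"
      by simp
    then show ?thesis
      by (simp only: norm_power2_eq_sum_inner power2_eq_square[of "sum _ _"] sum_product)
  qed
  note pair_integrable = integrable_std_gaussian_coord_powers[of _ _ 2 2]
  have pair: "(\<integral>x. (x \<bullet> b)\<^sup>2 * (x \<bullet> c)\<^sup>2 \<partial>std_gaussian) = (if b = c then 3 else 1)"
    if "b \<in> Basis" "c \<in> Basis" for b c :: "real ^ 'm"
    using integral_std_gaussian_coord_powers[OF that, of 2 2] by simp
  show "integrable std_gaussian (\<lambda>x::real ^ 'm. (norm x) ^ 4)"
    unfolding norm4 using pair_integrable by (auto intro!: Bochner_Integration.integrable_sum)
  have row: "(\<integral>x. (\<Sum>c\<in>Basis. (x \<bullet> b)\<^sup>2 * (x \<bullet> c)\<^sup>2) \<partial>std_gaussian) =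
      (\<Sum>c\<in>Basis. if b = c then 3 else 1)" if "b \<in> Basis" for b :: "real ^ 'm"
  proof -
    have "(\<integral>x. (\<Sum>c\<in>Basis. (x \<bullet> b)\<^sup>2 * (x \<bullet> c)\<^sup>2) \<partial>std_gaussian) =
        (\<Sum>c\<in>Basis. \<integral>x. (x \<bullet> b)\<^sup>2 * (x \<bullet> c)\<^sup>2 \<partial>std_gaussian)"
      using that pair_integrable by (intro Bochner_Integration.integral_sum) auto
    also have "\<dots> = (\<Sum>c\<in>Basis. if b = c then 3 else 1)"
      using that by (intro sum.cong refl pair)
    finally show ?thesis .
  qed
  have "(\<integral>x. (norm x) ^ 4 \<partial>(std_gaussian :: (real ^ 'm) measure)) =
      (\<Sum>b\<in>(Basis :: (real ^ 'm) set). \<Sum>c\<in>Basis. if b = c then 3 else 1)"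
    unfolding norm4 using pair_integrable
    by (subst Bochner_Integration.integral_sum)
      (auto simp: row intro!: Bochner_Integration.integrable_sum sum.cong)
  also have "\<dots> = (\<Sum>b\<in>(Basis :: (real ^ 'm) set). \<Sum>c\<in>Basis. 1 + (if b = c then 2 else 0))"
    by (intro sum.cong) auto
  also have "\<dots> = real CARD('m) * (real CARD('m) + 2)"
    by (simp add: sum.distrib algebra_simps)
  finally show "(\<integral>x. (norm x) ^ 4 \<partial>(std_gaussian :: (real ^ 'm) measure)) =
      real CARD('m) * (real CARD('m) + 2)" .
qed

section \<open>Exponential integrability\<close>

lemma std_normal_density_mult_exp:
  "std_normal_density t * exp (c * t) = exp (c\<^sup>2 / 2) * normal_density c 1 t"
proof -
  have "- t\<^sup>2 / 2 + c * t = c\<^sup>2 / 2 + (- (t - c)\<^sup>2 / 2)"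
    by (simp add: power2_eq_square field_simps)
  then have "exp (- t\<^sup>2 / 2) * exp (c * t) = exp (c\<^sup>2 / 2) * exp (- (t - c)\<^sup>2 / 2)"
    by (simp add: exp_add[symmetric])
  then show ?thesis
    unfolding std_normal_density_def normal_density_def by simp
qed

lemma integrable_std_normal_exp_abs: "integrable lborel (\<lambda>t. std_normal_density t * exp (c * \<bar>t\<bar>))"
proof (rule Bochner_Integration.integrable_bound)
  show "integrable lborel (\<lambda>t. std_normal_density t * exp (c * t) + std_normal_density t * exp (- c * t))"
    unfolding std_normal_density_mult_exp by simp
  have "std_normal_density t * exp (c * \<bar>t\<bar>) \<le>
      std_normal_density t * exp (c * t) + std_normal_density t * exp (- c * t)" for t
  proof -
    have "exp (c * \<bar>t\<bar>) \<le> exp (c * t) + exp (- c * t)"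
      by (cases "0 \<le> t") (simp_all add: add_increasing add_increasing2)
    then show ?thesis
      by (metis distrib_left mult_left_mono normal_density_nonneg)
  qed
  then show "AE t in lborel. norm (std_normal_density t * exp (c * \<bar>t\<bar>)) \<le>
      norm (std_normal_density t * exp (c * t) + std_normal_density t * exp (- c * t))"
    by (intro AE_I2) simp
qed simp

lemma integrable_std_gaussian_exp_norm: "integrable std_gaussian (\<lambda>x::real ^ 'm. exp (c * norm x))"
proof (rule Bochner_Integration.integrable_bound)
  show "integrable std_gaussian (\<lambda>x::real ^ 'm. \<Prod>b\<in>Basis. exp (\<bar>c\<bar> * \<bar>x \<bullet> b\<bar>))"
    using integrable_std_normal_exp_abs by (intro integrable_std_gaussian_prod_coords) auto
  have "norm (exp (c * norm x)) \<le> norm (\<Prod>b\<in>Basis. exp (\<bar>c\<bar> * \<bar>x \<bullet> b\<bar>))" for x :: "real ^ 'm"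
  proof -
    have "c * norm x \<le> \<bar>c\<bar> * norm x"
      by (simp add: mult_right_mono)
    also have "\<dots> \<le> \<bar>c\<bar> * (\<Sum>b\<in>Basis. \<bar>x \<bullet> b\<bar>)"
      using norm_le_l1[of x] by (simp add: mult_left_mono)
    finally have "c * norm x \<le> \<bar>c\<bar> * (\<Sum>b\<in>Basis. \<bar>x \<bullet> b\<bar>)" .
    then show ?thesis
      by (simp add: sum_distrib_left exp_sum[symmetric] prod_nonneg)
  qed
  then show "AE x in (std_gaussian :: (real ^ 'm) measure).
      norm (exp (c * norm x)) \<le> norm (\<Prod>b\<in>Basis. exp (\<bar>c\<bar> * \<bar>x \<bullet> b\<bar>))"
    by (intro AE_I2)
qed simp

lemma integrable_std_gaussian_exp_bound:
  fixes f :: "real ^ 'm \<Rightarrow> 'b::{banach, second_countable_topology}"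
  assumes "f \<in> borel_measurable borel" and "\<And>x. norm (f x) \<le> A * exp (c * norm x)"
  shows "integrable std_gaussian f"
proof (rule Bochner_Integration.integrable_bound)
  show "integrable std_gaussian (\<lambda>x::real ^ 'm. A * exp (c * norm x))"
    by (intro integrable_mult_right integrable_std_gaussian_exp_norm)
  show "AE x in std_gaussian. norm (f x) \<le> norm (A * exp (c * norm x))"
    using assms(2) by (intro AE_I2) (metis abs_ge_self order_trans real_norm_def)
qed (use assms(1) in simp)

lemma integrable_std_gaussian_scaleR_id:
  fixes \<psi> :: "real ^ 'm \<Rightarrow> real"
  assumes "\<psi> \<in> borel_measurable borel" and bound: "\<And>u. \<bar>\<psi> u\<bar> \<le> A * exp (c * norm u)"
  shows "integrable std_gaussian (\<lambda>u. \<psi> u *\<^sub>R u)"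
proof (rule integrable_std_gaussian_exp_bound)
  fix u :: "real ^ 'm"
  have "norm u \<le> exp (norm u)"
    using exp_ge_add_one_self[of "norm u"] by linarith
  then have "\<bar>\<psi> u\<bar> * norm u \<le> A * exp (c * norm u) * exp (norm u)"
    using bound[of u] by (intro mult_mono) auto
  then show "norm (\<psi> u *\<^sub>R u) \<le> A * exp ((c + 1) * norm u)"
    by (simp add: distrib_right exp_add mult.assoc)
qed (use assms(1) in simp)

section \<open>Differentiating Gaussian translates\<close>

lemma abs_exp_minus_one_minus_le: "\<bar>exp a - 1 - a\<bar> \<le> a\<^sup>2 * exp \<bar>a\<bar>"
  for a :: real
proof -
  obtain t where t: "\<bar>t\<bar> \<le> \<bar>a\<bar>" and "exp a = (\<Sum>m<2. a ^ m / fact m) + exp t / fact 2 * a ^ 2"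
    using Maclaurin_exp_le[of a 2] by blast
  then have "\<bar>exp a - 1 - a\<bar> = exp t / 2 * a\<^sup>2"
    by (simp add: numeral_2_eq_2)
  also have "\<dots> \<le> exp \<bar>a\<bar> * a\<^sup>2"
  proof (intro mult_right_mono)
    have "exp t \<le> exp \<bar>a\<bar>"
      using t by simp
    then show "exp t / 2 \<le> exp \<bar>a\<bar>"
      using exp_gt_zero[of t] by linarith
  qed simp
  finally show ?thesis
    by (simp add: mult.commute)
qed

lemma abs_inner_minus_half_norm_power2_le:
  fixes v s :: "'a::real_inner"
  assumes "norm s \<le> 1"
  shows "\<bar>v \<bullet> s - (norm s)\<^sup>2 / 2\<bar> \<le> norm s * (1 + norm v)"
proof -
  have "\<bar>v \<bullet> s - (norm s)\<^sup>2 / 2\<bar> \<le> \<bar>v \<bullet> s\<bar> + (norm s)\<^sup>2 / 2"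
    using abs_triangle_ineq4[of "v \<bullet> s" "(norm s)\<^sup>2 / 2"] by simp
  moreover have "\<bar>v \<bullet> s\<bar> \<le> norm s * norm v"
    using Cauchy_Schwarz_ineq2[of v s] by (simp add: mult.commute)
  moreover have "(norm s)\<^sup>2 \<le> norm s"
    using assms by (simp add: power2_eq_square mult_left_le)
  ultimately have "\<bar>v \<bullet> s - (norm s)\<^sup>2 / 2\<bar> \<le> norm s + norm s * norm v"
    using norm_ge_zero[of s] by linarith
  then show ?thesis
    by (simp add: distrib_left)
qed

lemma gaussian_shift_factor_remainder_le:
  fixes v s :: "'a::real_inner"
  assumes s: "norm s \<le> 1"
  shows "\<bar>exp (v \<bullet> s - (norm s)\<^sup>2 / 2) - 1 - v \<bullet> s\<bar> \<le> 2 * exp 1 * (norm s)\<^sup>2 * exp (3 * norm v)"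
proof -
  define a where "a = v \<bullet> s - (norm s)\<^sup>2 / 2"
  define r where "r = norm s"
  define x where "x = norm v"
  have r: "0 \<le> r" "r \<le> 1" and x: "0 \<le> x"
    using s by (simp_all add: r_def x_def)
  have a_le: "\<bar>a\<bar> \<le> r * (1 + x)"
    unfolding a_def r_def x_def using s by (rule abs_inner_minus_half_norm_power2_le)
  also have "\<dots> \<le> 1 + x"
    using r x by (simp add: mult_left_le_one_le)
  finally have a_le1: "\<bar>a\<bar> \<le> 1 + x" .
  have "a\<^sup>2 \<le> (r * (1 + x))\<^sup>2"
    using power_mono[OF a_le abs_ge_zero, of 2] by simp
  also have "\<dots> \<le> r\<^sup>2 * (exp x)\<^sup>2"
    unfolding power_mult_distrib
    using x by (intro mult_left_mono power_mono) (simp_all add: add.commute exp_ge_add_one_self)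
  finally have a_sq: "a\<^sup>2 \<le> r\<^sup>2 * exp (2 * x)"
    by (simp add: exp_double[symmetric] mult.commute)
  have "exp a - 1 - v \<bullet> s = (exp a - 1 - a) - r\<^sup>2 / 2"
    by (simp add: a_def r_def)
  then have "\<bar>exp a - 1 - v \<bullet> s\<bar> \<le> \<bar>exp a - 1 - a\<bar> + r\<^sup>2 / 2"
    using abs_triangle_ineq4[of "exp a - 1 - a" "r\<^sup>2 / 2"] by simp
  also have "\<dots> \<le> a\<^sup>2 * exp \<bar>a\<bar> + r\<^sup>2 / 2"
    using abs_exp_minus_one_minus_le[of a] by simp
  also have "\<dots> \<le> r\<^sup>2 * exp (2 * x) * exp (1 + x) + r\<^sup>2 * (exp 1 * exp (3 * x))"
  proof (intro add_mono mult_mono)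
    have "1 \<le> exp 1 * exp (3 * x)"
      using x by (simp add: exp_add[symmetric])
    then show "r\<^sup>2 / 2 \<le> r\<^sup>2 * (exp 1 * exp (3 * x))"
      using zero_le_power2[of r] mult_left_mono[of 1 "exp 1 * exp (3 * x)" "r\<^sup>2"] by linarith
  qed (use a_sq a_le1 in simp_all)
  also have "\<dots> = 2 * exp 1 * r\<^sup>2 * exp (3 * x)"
  proof -
    have "exp (2 * x) * exp (1 + x) = exp 1 * exp (3 * x)"
      unfolding exp_add[symmetric] by (simp add: algebra_simps)
    then show ?thesis
      unfolding mult.assoc[of "r\<^sup>2"] by simp
  qed
  finally show ?thesis
    unfolding a_def r_def x_def .
qed

lemma has_derivative_at_of_quadratic_remainder:
  fixes F :: "'a::real_normed_vector \<Rightarrow> 'b::real_normed_vector"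
  assumes D: "bounded_linear D" and \<delta>: "0 < \<delta>"
    and remainder: "\<And>h. norm h < \<delta> \<Longrightarrow> norm (F (x + h) - F x - D h) \<le> M * (norm h)\<^sup>2"
  shows "(F has_derivative D) (at x)"
  unfolding has_derivative_at
proof (intro conjI D, rule Lim_null_comparison)
  have "norm (F (x + h) - F x - D h) / norm h \<le> M * norm h" if "0 < norm h" "norm h < \<delta>" for h
    using remainder[OF that(2)] that(1) by (simp add: divide_le_eq power2_eq_square mult.assoc)
  then show "\<forall>\<^sub>F h in at 0. norm (norm (F (x + h) - F x - D h) / norm h) \<le> M * norm h"
    unfolding eventually_at using \<delta> by (intro exI[of _ \<delta>]) auto
  show "((\<lambda>h. M * norm h) \<longlongrightarrow> 0) (at 0)"
    by (intro tendsto_mult_right_zero tendsto_norm_zero tendsto_ident_at)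
qed

lemma std_gaussian_density_diff:
  "std_gaussian_density (v - s) = std_gaussian_density v * exp (v \<bullet> s - (norm s)\<^sup>2 / 2)"
proof -
  have "- (norm (v - s))\<^sup>2 / 2 = - (norm v)\<^sup>2 / 2 + (v \<bullet> s - (norm s)\<^sup>2 / 2)"
    by (simp add: power2_norm_eq_inner inner_diff inner_commute field_simps)
  then have "exp (- (norm (v - s))\<^sup>2 / 2) = exp (- (norm v)\<^sup>2 / 2) * exp (v \<bullet> s - (norm s)\<^sup>2 / 2)"
    by (simp only: exp_add)
  then show ?thesis
    by (simp add: std_gaussian_density_def)
qed

lemma integral_std_gaussian_translate:
  fixes \<psi> :: "real ^ 'm \<Rightarrow> 'b::{banach, second_countable_topology}"
  assumes [measurable]: "\<psi> \<in> borel_measurable borel"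
  shows "(\<integral>u. \<psi> (u + s) \<partial>std_gaussian) = (\<integral>v. exp (v \<bullet> s - (norm s)\<^sup>2 / 2) *\<^sub>R \<psi> v \<partial>std_gaussian)"
proof -
  have "(\<integral>u. \<psi> (u + s) \<partial>std_gaussian) = (\<integral>u. std_gaussian_density (s + u - s) *\<^sub>R \<psi> (s + u) \<partial>lborel)"
    by (simp add: integral_std_gaussian add.commute)
  also have "\<dots> = (\<integral>v. std_gaussian_density (v - s) *\<^sub>R \<psi> v \<partial>distr lborel borel ((+) s))"
    by (subst integral_distr) auto
  also have "\<dots> = (\<integral>v. std_gaussian_density v *\<^sub>R (exp (v \<bullet> s - (norm s)\<^sup>2 / 2) *\<^sub>R \<psi> v) \<partial>lborel)"
    by (simp add: lborel_distr_plus std_gaussian_density_diff)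
  also have "\<dots> = (\<integral>v. exp (v \<bullet> s - (norm s)\<^sup>2 / 2) *\<^sub>R \<psi> v \<partial>std_gaussian)"
    by (simp add: integral_std_gaussian)
  finally show ?thesis .
qed

lemma integral_std_gaussian_translate_remainder:
  fixes \<psi> :: "real ^ 'm \<Rightarrow> real"
  assumes [measurable]: "\<psi> \<in> borel_measurable borel"
    and growth: "\<And>u. \<bar>\<psi> u\<bar> \<le> A * exp (norm u)"
    and s: "norm s \<le> 1"
  shows "(\<integral>u. \<psi> (u + s) \<partial>std_gaussian) - (\<integral>u. \<psi> u \<partial>std_gaussian) - (\<integral>v. \<psi> v *\<^sub>R v \<partial>std_gaussian) \<bullet> s =
    (\<integral>v. \<psi> v * (exp (v \<bullet> s - (norm s)\<^sup>2 / 2) - 1 - v \<bullet> s) \<partial>std_gaussian)"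
proof -
  define E where "E v = exp (v \<bullet> s - (norm s)\<^sup>2 / 2)" for v :: "real ^ 'm"
  have E_le: "E v \<le> exp (norm v)" for v
  proof -
    have "v \<bullet> s \<le> norm v"
      using norm_cauchy_schwarz[of v s] s mult_left_le[of "norm s" "norm v"] by simp
    then have "v \<bullet> s - (norm s)\<^sup>2 / 2 \<le> norm v"
      using zero_le_power2[of "norm s"] by linarith
    then show ?thesis
      unfolding E_def by simp
  qed
  have "integrable std_gaussian (\<lambda>v. E v * \<psi> v)"
  proof (rule integrable_std_gaussian_exp_bound)
    fix v :: "real ^ 'm"
    have "\<bar>E v\<bar> * \<bar>\<psi> v\<bar> \<le> exp (norm v) * (A * exp (norm v))"
      using E_le[of v] growth[of v] by (intro mult_mono) (auto simp: E_def)
    also have "\<dots> = A * exp (2 * norm v)"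
      unfolding exp_double by (simp add: power2_eq_square ac_simps)
    finally show "norm (E v * \<psi> v) \<le> A * exp (2 * norm v)"
      by (simp add: abs_mult)
  qed (unfold E_def, measurable)
  moreover have "integrable std_gaussian \<psi>"
    using growth by (intro integrable_std_gaussian_exp_bound[where c = 1]) simp_all
  moreover have scaled: "integrable std_gaussian (\<lambda>v. \<psi> v *\<^sub>R v)"
    using growth by (intro integrable_std_gaussian_scaleR_id[where c = 1]) simp_all
  then have "integrable std_gaussian (\<lambda>v. \<psi> v * (v \<bullet> s))"
    using integrable_inner_left[OF scaled, of s] by simp
  moreover have "(\<integral>v. \<psi> v *\<^sub>R v \<partial>std_gaussian) \<bullet> s = (\<integral>v. \<psi> v * (v \<bullet> s) \<partial>std_gaussian)"
    using integral_inner_left[OF scaled, of s] by simp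
  moreover have "(\<integral>u. \<psi> (u + s) \<partial>std_gaussian) = (\<integral>v. E v * \<psi> v \<partial>std_gaussian)"
    using integral_std_gaussian_translate[of \<psi> s] by (simp add: E_def)
  moreover have "(\<integral>v. \<psi> v * (E v - 1 - v \<bullet> s) \<partial>std_gaussian) =
      (\<integral>v. E v * \<psi> v - \<psi> v - \<psi> v * (v \<bullet> s) \<partial>std_gaussian)"
    by (intro Bochner_Integration.integral_cong) (simp_all add: algebra_simps)
  ultimately show ?thesis
    unfolding E_def[symmetric] by simp
qed

lemma has_derivative_std_gaussian_translate:
  fixes \<psi> :: "real ^ 'm \<Rightarrow> real"
  assumes [measurable]: "\<psi> \<in> borel_measurable borel"
    and growth: "\<And>u. \<bar>\<psi> u\<bar> \<le> A * exp (norm u)"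
  shows "((\<lambda>s. \<integral>u. \<psi> (u + s) \<partial>std_gaussian) has_derivative
      (\<lambda>s. (\<integral>v. \<psi> v *\<^sub>R v \<partial>std_gaussian) \<bullet> s)) (at 0)"
proof (rule has_derivative_at_of_quadratic_remainder)
  define M where "M = 2 * exp 1 * A * (\<integral>v. exp (4 * norm v) \<partial>(std_gaussian :: (real ^ 'm) measure))"
  fix s :: "real ^ 'm"
  assume "norm s < 1"
  then have s: "norm s \<le> 1"
    by simp
  have "0 \<le> A"
    using growth[of 0] abs_ge_zero[of "\<psi> 0"] by simp
  let ?R = "\<lambda>v. \<psi> v * (exp (v \<bullet> s - (norm s)\<^sup>2 / 2) - 1 - v \<bullet> s)"
  have R_le: "\<bar>?R v\<bar> \<le> (norm s)\<^sup>2 * (2 * exp 1 * A * exp (4 * norm v))" for v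
  proof -
    have "\<bar>?R v\<bar> \<le> (A * exp (norm v)) * (2 * exp 1 * (norm s)\<^sup>2 * exp (3 * norm v))"
      unfolding abs_mult using \<open>0 \<le> A\<close> growth gaussian_shift_factor_remainder_le[OF s]
      by (intro mult_mono) auto
    also have "\<dots> = (norm s)\<^sup>2 * (2 * exp 1 * A * (exp (norm v) * exp (3 * norm v)))"
      by (simp add: ac_simps)
    finally show ?thesis
      by (simp add: exp_add[symmetric])
  qed
  have "\<bar>\<integral>v. ?R v \<partial>std_gaussian\<bar> \<le>
      (\<integral>v. (norm s)\<^sup>2 * (2 * exp 1 * A * exp (4 * norm v)) \<partial>(std_gaussian :: (real ^ 'm) measure))"
  proof (rule integral_abs_bound_integral)
    show "integrable std_gaussian (\<lambda>v::real ^ 'm. (norm s)\<^sup>2 * (2 * exp 1 * A * exp (4 * norm v)))"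
      by (intro integrable_mult_right integrable_std_gaussian_exp_norm)
    show "integrable std_gaussian ?R"
    proof (rule integrable_std_gaussian_exp_bound[where c = 4])
      show "norm (?R v) \<le> (norm s)\<^sup>2 * (2 * exp 1 * A) * exp (4 * norm v)" for v
        using R_le[of v] by (simp add: mult.assoc)
    qed measurable
  qed (rule R_le)
  then show "norm ((\<integral>u. \<psi> (u + (0 + s)) \<partial>std_gaussian) - (\<integral>u. \<psi> (u + 0) \<partial>std_gaussian) -
      (\<integral>v. \<psi> v *\<^sub>R v \<partial>std_gaussian) \<bullet> s) \<le> M * (norm s)\<^sup>2"
    using integral_std_gaussian_translate_remainder[OF assms(1) growth s] by (simp add: M_def mult_ac)
qed (simp_all add: bounded_linear_inner_right)

section \<open>Gaussian smoothing and the zeroth-order estimator\<close>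

lemma lipschitz_on_abs_diff_translate_le:
  fixes f :: "'a::real_normed_vector \<Rightarrow> real"
  assumes "L-lipschitz_on UNIV f" and "0 \<le> \<mu>"
  shows "\<bar>f (y + \<mu> *\<^sub>R u) - f y\<bar> \<le> L * \<mu> * norm u"
proof -
  have "\<bar>f (y + \<mu> *\<^sub>R u) - f y\<bar> \<le> L * dist (y + \<mu> *\<^sub>R u) y"
    using lipschitz_onD[OF assms(1)] by (simp add: dist_real_def)
  then show ?thesis
    using assms(2) by (simp add: dist_norm mult.assoc)
qed

lemma lipschitz_on_abs_translate_le_exp:
  fixes f :: "'a::real_normed_vector \<Rightarrow> real"
  assumes lip: "L-lipschitz_on UNIV f" and \<mu>: "0 \<le> \<mu>"
  shows "\<bar>f (y + \<mu> *\<^sub>R u)\<bar> \<le> (\<bar>f y\<bar> + L * \<mu>) * exp (norm u)"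
proof -
  have "0 \<le> L"
    using lip by (rule lipschitz_on_nonneg)
  have "\<bar>f (y + \<mu> *\<^sub>R u)\<bar> \<le> \<bar>f y\<bar> + L * \<mu> * norm u"
    using lipschitz_on_abs_diff_translate_le[OF assms, of y u] by linarith
  also have "\<dots> \<le> (\<bar>f y\<bar> + L * \<mu>) * (1 + norm u)"
    using \<open>0 \<le> L\<close> \<mu> by (simp add: algebra_simps)
  also have "\<dots> \<le> (\<bar>f y\<bar> + L * \<mu>) * exp (norm u)"
    using \<open>0 \<le> L\<close> \<mu> by (intro mult_left_mono) (simp_all add: add.commute exp_ge_add_one_self)
  finally show ?thesis .
qed

lemma
  fixes \<phi> :: "real ^ 'm \<Rightarrow> real"
  assumes lip: "L-lipschitz_on UNIV \<phi>" and \<mu>: "0 < \<mu>"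
  shows integrable_gauss_smooth_gradient: "integrable std_gaussian (\<lambda>u. \<phi> (y + \<mu> *\<^sub>R u) *\<^sub>R u)"
    and gauss_smooth_has_derivative: "(gauss_smooth \<mu> \<phi> has_derivative
      (\<lambda>h. ((1 / \<mu>) *\<^sub>R (\<integral>u. \<phi> (y + \<mu> *\<^sub>R u) *\<^sub>R u \<partial>std_gaussian)) \<bullet> h)) (at y)"
proof -
  define \<psi> where "\<psi> u = \<phi> (y + \<mu> *\<^sub>R u)" for u
  have "continuous_on UNIV \<psi>"
    unfolding \<psi>_def
    by (intro continuous_on_compose2[OF lipschitz_on_continuous_on[OF lip]] continuous_intros) auto
  then have [measurable]: "\<psi> \<in> borel_measurable borel"
    by (rule borel_measurable_continuous_onI)
  have growth: "\<bar>\<psi> u\<bar> \<le> (\<bar>\<phi> y\<bar> + L * \<mu>) * exp (norm u)" for u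
    unfolding \<psi>_def using lipschitz_on_abs_translate_le_exp[OF lip] \<mu> by simp
  have "integrable std_gaussian (\<lambda>u. \<psi> u *\<^sub>R u)"
    using growth by (intro integrable_std_gaussian_scaleR_id[where c = 1]) simp_all
  then show "integrable std_gaussian (\<lambda>u. \<phi> (y + \<mu> *\<^sub>R u) *\<^sub>R u)"
    by (simp add: \<psi>_def)
  define T where "T y' = (1 / \<mu>) *\<^sub>R (y' - y)" for y'
  have "y + \<mu> *\<^sub>R (u + T y') = y' + \<mu> *\<^sub>R u" for u y'
    using \<mu> by (simp add: T_def scaleR_add_right)
  then have smooth_eq: "gauss_smooth \<mu> \<phi> = (\<lambda>s. \<integral>u. \<psi> (u + s) \<partial>std_gaussian) \<circ> T"
    by (simp add: fun_eq_iff gauss_smooth_def \<psi>_def)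
  have "(T has_derivative (\<lambda>h. (1 / \<mu>) *\<^sub>R h)) (at y)"
    unfolding T_def by (auto intro!: derivative_eq_intros)
  moreover have "((\<lambda>s. \<integral>u. \<psi> (u + s) \<partial>std_gaussian) has_derivative
      (\<lambda>s. (\<integral>v. \<psi> v *\<^sub>R v \<partial>std_gaussian) \<bullet> s)) (at (T y))"
    unfolding T_def using has_derivative_std_gaussian_translate[OF _ growth] by simp
  ultimately have "(gauss_smooth \<mu> \<phi> has_derivative
      (\<lambda>s. (\<integral>v. \<psi> v *\<^sub>R v \<partial>std_gaussian) \<bullet> s) \<circ> (\<lambda>h. (1 / \<mu>) *\<^sub>R h)) (at y)"
    unfolding smooth_eq by (rule diff_chain_at)
  then show "(gauss_smooth \<mu> \<phi> has_derivative
      (\<lambda>h. ((1 / \<mu>) *\<^sub>R (\<integral>u. \<phi> (y + \<mu> *\<^sub>R u) *\<^sub>R u \<partial>std_gaussian)) \<bullet> h)) (at y)"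
    by (simp add: o_def \<psi>_def)
qed

lemma
  fixes \<phi> \<psi> :: "real ^ 'm \<Rightarrow> real"
  assumes "integrable std_gaussian (\<lambda>u. \<phi> (y + \<mu> *\<^sub>R u) *\<^sub>R u)"
  shows integrable_zo_grad: "integrable std_gaussian (zo_grad \<mu> \<phi> \<psi> y)"
    and integral_zo_grad: "(\<integral>u. zo_grad \<mu> \<phi> \<psi> y u \<partial>std_gaussian) =
      (1 / \<mu>) *\<^sub>R (\<integral>u. \<phi> (y + \<mu> *\<^sub>R u) *\<^sub>R u \<partial>std_gaussian)"
proof -
  have zo_grad_eq: "zo_grad \<mu> \<phi> \<psi> y = (\<lambda>u. (1 / \<mu>) *\<^sub>R (\<phi> (y + \<mu> *\<^sub>R u) *\<^sub>R u - \<psi> y *\<^sub>R u))"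
    by (simp add: fun_eq_iff zo_grad_def scaleR_diff_left)
  show "integrable std_gaussian (zo_grad \<mu> \<phi> \<psi> y)"
    unfolding zo_grad_eq using assms integrable_std_gaussian_id
    by (auto intro!: integrable_scaleR_right Bochner_Integration.integrable_diff)
  show "(\<integral>u. zo_grad \<mu> \<phi> \<psi> y u \<partial>std_gaussian) =
      (1 / \<mu>) *\<^sub>R (\<integral>u. \<phi> (y + \<mu> *\<^sub>R u) *\<^sub>R u \<partial>std_gaussian)"
  proof -
    have "(\<integral>u. \<phi> (y + \<mu> *\<^sub>R u) *\<^sub>R u - \<psi> y *\<^sub>R u \<partial>std_gaussian) =
        (\<integral>u. \<phi> (y + \<mu> *\<^sub>R u) *\<^sub>R u \<partial>std_gaussian) - (\<integral>u. \<psi> y *\<^sub>R u \<partial>std_gaussian)"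
      using assms integrable_std_gaussian_id by (intro Bochner_Integration.integral_diff) auto
    then show ?thesis
      by (simp add: zo_grad_eq integral_std_gaussian_id)
  qed
qed

lemma norm_zo_grad_power2_le:
  fixes \<phi> \<psi> :: "real ^ 'm \<Rightarrow> real"
  assumes lip: "L-lipschitz_on UNIV \<phi>" and close: "\<bar>\<phi> y - \<psi> y\<bar> \<le> V" and \<mu>: "0 < \<mu>"
  shows "(norm (zo_grad \<mu> \<phi> \<psi> y u))\<^sup>2 \<le> 2 * L\<^sup>2 * (norm u) ^ 4 + 2 * V\<^sup>2 / \<mu>\<^sup>2 * (norm u)\<^sup>2"
proof -
  define d where "d = \<phi> (y + \<mu> *\<^sub>R u) - \<phi> y"
  define e where "e = \<phi> y - \<psi> y"
  have "\<bar>d\<bar> \<le> L * \<mu> * norm u"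
    using lipschitz_on_abs_diff_translate_le[OF lip, of \<mu> y u] \<mu> by (simp add: d_def)
  then have "d\<^sup>2 \<le> (L * \<mu> * norm u)\<^sup>2"
    using power_mono[of "\<bar>d\<bar>" _ 2] by simp
  moreover have "e\<^sup>2 \<le> V\<^sup>2"
    using close power_mono[of "\<bar>e\<bar>" V 2] by (simp add: e_def)
  moreover have "(d + e)\<^sup>2 \<le> 2 * d\<^sup>2 + 2 * e\<^sup>2"
    using zero_le_power2[of "d - e"] by (simp add: power2_eq_square algebra_simps)
  ultimately have "(d + e)\<^sup>2 \<le> 2 * L\<^sup>2 * \<mu>\<^sup>2 * (norm u)\<^sup>2 + 2 * V\<^sup>2"
    by (simp add: power_mult_distrib)
  moreover have "(norm (zo_grad \<mu> \<phi> \<psi> y u))\<^sup>2 = (d + e)\<^sup>2 * (norm u)\<^sup>2 / \<mu>\<^sup>2"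
    using \<mu> by (simp add: zo_grad_def d_def e_def power_mult_distrib power_divide)
  ultimately have "(norm (zo_grad \<mu> \<phi> \<psi> y u))\<^sup>2 \<le>
      (2 * L\<^sup>2 * \<mu>\<^sup>2 * (norm u)\<^sup>2 + 2 * V\<^sup>2) * (norm u)\<^sup>2 / \<mu>\<^sup>2"
    by (simp add: divide_right_mono mult_right_mono)
  also have "\<dots> = 2 * L\<^sup>2 * ((norm u)\<^sup>2)\<^sup>2 + 2 * V\<^sup>2 / \<mu>\<^sup>2 * (norm u)\<^sup>2"
    using \<mu> by (simp add: field_simps power2_eq_square)
  finally show ?thesis
    by simp
qed

lemma
  fixes \<phi> \<psi> :: "real ^ 'm \<Rightarrow> real" and L V \<mu> :: real
  assumes lip: "L-lipschitz_on UNIV \<phi>" and close: "\<bar>\<phi> y - \<psi> y\<bar> \<le> V" and \<mu>: "0 < \<mu>"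
  shows integrable_norm_zo_grad_power2:
      "integrable std_gaussian (\<lambda>u. (norm (zo_grad \<mu> \<phi> \<psi> y u))\<^sup>2)"
    and integral_norm_zo_grad_power2_le:
      "(\<integral>u. (norm (zo_grad \<mu> \<phi> \<psi> y u))\<^sup>2 \<partial>std_gaussian) \<le>
         2 * L\<^sup>2 * (real CARD('m) * (real CARD('m) + 2)) + 2 * real CARD('m) * V\<^sup>2 / \<mu>\<^sup>2"
proof -
  let ?B = "\<lambda>u::real ^ 'm. 2 * L\<^sup>2 * (norm u) ^ 4 + 2 * V\<^sup>2 / \<mu>\<^sup>2 * (norm u)\<^sup>2"
  have B: "integrable std_gaussian ?B"
    by (intro Bochner_Integration.integrable_add integrable_mult_right
        integrable_std_gaussian_norm_power2 integrable_std_gaussian_norm_power4)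
  have "continuous_on UNIV \<phi>"
    using lip by (rule lipschitz_on_continuous_on)
  then have [measurable]: "\<phi> \<in> borel_measurable borel"
    by (rule borel_measurable_continuous_onI)
  note bound = norm_zo_grad_power2_le[where \<psi> = \<psi>, OF lip close \<mu>]
  show int: "integrable std_gaussian (\<lambda>u. (norm (zo_grad \<mu> \<phi> \<psi> y u))\<^sup>2)"
  proof (rule Bochner_Integration.integrable_bound[OF B])
    show "(\<lambda>u. (norm (zo_grad \<mu> \<phi> \<psi> y u))\<^sup>2) \<in> borel_measurable std_gaussian"
      unfolding zo_grad_def by measurable
    show "AE u in std_gaussian. norm ((norm (zo_grad \<mu> \<phi> \<psi> y u))\<^sup>2) \<le> norm (?B u)"
      using bound by (intro AE_I2) (simp add: order_trans[OF _ abs_ge_self])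
  qed
  have "(\<integral>u. (norm (zo_grad \<mu> \<phi> \<psi> y u))\<^sup>2 \<partial>std_gaussian) \<le> (\<integral>u. ?B u \<partial>std_gaussian)"
    using int B bound by (intro integral_mono)
  also have "\<dots> = 2 * L\<^sup>2 * (real CARD('m) * (real CARD('m) + 2)) + 2 * real CARD('m) * V\<^sup>2 / \<mu>\<^sup>2"
    by (simp add: integrable_std_gaussian_norm_power2 integrable_std_gaussian_norm_power4
        integral_std_gaussian_norm_power2 integral_std_gaussian_norm_power4)
  finally show "(\<integral>u. (norm (zo_grad \<mu> \<phi> \<psi> y u))\<^sup>2 \<partial>std_gaussian) \<le>
      2 * L\<^sup>2 * (real CARD('m) * (real CARD('m) + 2)) + 2 * real CARD('m) * V\<^sup>2 / \<mu>\<^sup>2" .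
qed

theorem mainTheorem7:
  fixes \<phi>1 \<phi>2 :: "real ^ 'm \<Rightarrow> real" and L V \<mu> :: real and y :: "real ^ 'm"
  assumes lip: "L-lipschitz_on UNIV \<phi>1"
    and close: "\<And>w. \<bar>\<phi>1 w - \<phi>2 w\<bar> \<le> V"
    and mu: "\<mu> > 0"
  shows "(gauss_smooth \<mu> \<phi>1 has_derivative
            (\<lambda>h. (\<integral>u. zo_grad \<mu> \<phi>1 \<phi>2 y u \<partial>std_gaussian) \<bullet> h)) (at y)
    \<and> integrable std_gaussian (\<lambda>u. zo_grad \<mu> \<phi>1 \<phi>2 y u)
    \<and> integrable std_gaussian (\<lambda>u. (norm (zo_grad \<mu> \<phi>1 \<phi>2 y u))\<^sup>2)
    \<and> (\<integral>u. (norm (zo_grad \<mu> \<phi>1 \<phi>2 y u))\<^sup>2 \<partial>std_gaussian)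
           \<le> 2 * L\<^sup>2 * (real CARD('m) + 4)\<^sup>2 + 2 * real CARD('m) * V\<^sup>2 / \<mu>\<^sup>2"
proof (intro conjI)
  have gradient: "integrable std_gaussian (\<lambda>u. \<phi>1 (y + \<mu> *\<^sub>R u) *\<^sub>R u)"
    using lip mu by (rule integrable_gauss_smooth_gradient)
  show "(gauss_smooth \<mu> \<phi>1 has_derivative (\<lambda>h. (\<integral>u. zo_grad \<mu> \<phi>1 \<phi>2 y u \<partial>std_gaussian) \<bullet> h)) (at y)"
    unfolding integral_zo_grad[OF gradient] using lip mu by (rule gauss_smooth_has_derivative)
  show "integrable std_gaussian (\<lambda>u. zo_grad \<mu> \<phi>1 \<phi>2 y u)"
    using integrable_zo_grad[OF gradient] by simp
  show "integrable std_gaussian (\<lambda>u. (norm (zo_grad \<mu> \<phi>1 \<phi>2 y u))\<^sup>2)"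
    using integrable_norm_zo_grad_power2[where \<psi> = \<phi>2, OF lip close[of y] mu] .
  have "2 * L\<^sup>2 * (real CARD('m) * (real CARD('m) + 2)) \<le> 2 * L\<^sup>2 * (real CARD('m) + 4)\<^sup>2"
    by (intro mult_left_mono) (simp_all add: power2_eq_square algebra_simps)
  then show "(\<integral>u. (norm (zo_grad \<mu> \<phi>1 \<phi>2 y u))\<^sup>2 \<partial>std_gaussian)
      \<le> 2 * L\<^sup>2 * (real CARD('m) + 4)\<^sup>2 + 2 * real CARD('m) * V\<^sup>2 / \<mu>\<^sup>2"
    using integral_norm_zo_grad_power2_le[where \<psi> = \<phi>2, OF lip close[of y] mu] by linarith
qed

end
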